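(* Let $n\ge 1$ and let $h$ be a hole of the triangular board $T_n$. Suppose a sequence of jumps on $T_n$ starts from the position in which every hole holds a peg except $h$, and ends in the position in which exactly one peg remains, located at $h$ (a solution to the complement problem at $h$). Then none of the board positions occurring in this sequence has $120^\circ$ rotational symmetry, i.e., no such position $P$ satisfies $P(r(g))=P(g)$ for every hole $g$, where $r(x,y)=(y-x,\,n-1-x)$.
   Context: The triangular board $T_n$ is the set of holes with integer skew coordinates $(x,y)$ satisfying $0\le x\le y\le n-1$. A board position $P$ assigns to each hole either a peg or no peg. A jump takes a peg at hole $p$, jumps it over a peg at an adjacent hole $p+d$ into an empty hole $p+2d$, where $d$ is one of the six directions $(\pm1,0)$, $(0,\pm1)$, $(1,1)$, $(-1,-1)$ and all three holes lie in $T_n$; the jumped-over peg is removed. The map $r(x,y)=(y-x,n-1-x)$ is the counterclockwise rotation of $T_n$ by $120^\circ$ in skew coordinates; a position has $120^\circ$ rotational symmetry if it is invariant under $r$. *)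

theory Defs
  imports Main
begin

text \<open>Holes of the triangular board T_n in skew coordinates.\<close>
definition board :: "nat \<Rightarrow> (int \<times> int) set" where
  "board n = {(x, y). 0 \<le> x \<and> x \<le> y \<and> y \<le> int n - 1}"

definition dirs :: "(int \<times> int) set" where
  "dirs = {(1,0), (-1,0), (0,1), (0,-1), (1,1), (-1,-1)}"

text \<open>A board position is represented by the set of holes holding a peg.
  jump n P Q: Q arises from P by one jump on T_n.\<close>
definition jump :: "nat \<Rightarrow> (int \<times> int) set \<Rightarrow> (int \<times> int) set \<Rightarrow> bool" where
  "jump n P Q \<longleftrightarrow> (\<exists>x y dx dy. (dx, dy) \<in> dirs \<and>
      (x, y) \<in> board n \<and> (x + dx, y + dy) \<in> board n \<and>
      (x + 2 * dx, y + 2 * dy) \<in> board n \<and>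
      (x, y) \<in> P \<and> (x + dx, y + dy) \<in> P \<and> (x + 2 * dx, y + 2 * dy) \<notin> P \<and>
      Q = (P - {(x, y), (x + dx, y + dy)}) \<union> {(x + 2 * dx, y + 2 * dy)})"

definition rot :: "nat \<Rightarrow> int \<times> int \<Rightarrow> int \<times> int" where
  "rot n g = (snd g - fst g, int n - 1 - fst g)"

definition rot_symmetric :: "nat \<Rightarrow> (int \<times> int) set \<Rightarrow> bool" where
  "rot_symmetric n P \<longleftrightarrow> (\<forall>g \<in> board n. (rot n g \<in> P \<longleftrightarrow> g \<in> P))"

definition jump_seq :: "nat \<Rightarrow> (int \<times> int) set list \<Rightarrow> bool" where
  "jump_seq n Ps \<longleftrightarrow> Ps \<noteq> [] \<and> (\<forall>i. Suc i < length Ps \<longrightarrow> jump n (Ps ! i) (Ps ! Suc i))"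

end

(*
  Colour the hole (x, y) by (x + y) mod 3. The three holes of a jump line carry three different
  colours, so a jump changes every colour count by exactly one and the parity of the sum of any
  two colour counts is invariant. A single peg has colour counts (1, 0, 0) up to order.

  If n mod 3 \<noteq> 1, the rotation shifts colours by n - 1, which is nonzero mod 3, so a symmetric
  position has three equal colour counts and cannot lie in the parity class of a single peg.
  If n mod 3 = 1, the board has colour counts (k + 1, k, k), so the start board - {h} and the
  finish {h} already lie in different parity classes: there is no complement solution at all.
*)

theory Submission
  imports Defs
begin

definition colour :: "int \<times> int \<Rightarrow> int" where
  "colour g = (fst g + snd g) mod 3"

definition colour_count :: "int \<Rightarrow> (int \<times> int) set \<Rightarrow> nat" where
  "colour_count c P = card {g \<in> P. colour g = c mod 3}"

definition same_colour_parity :: "(int \<times> int) set \<Rightarrow> int \<Rightarrow> int \<Rightarrow> bool" where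
  "same_colour_parity P a b \<longleftrightarrow> even (colour_count a P + colour_count b P)"

lemma eq_if_mod_eq_abs_diff_less:
  fixes a b m :: int
  assumes "a mod m = b mod m" and "\<bar>a - b\<bar> < m"
  shows "a = b"
proof -
  obtain k where k: "a - b = m * k"
    using assms(1) by (metis dvdE mod_eq_dvd_iff)
  have "k = 0"
  proof (rule ccontr)
    assume "k \<noteq> 0"
    then have "1 \<le> \<bar>k\<bar>"
      by arith
    then have "\<bar>m\<bar> \<le> \<bar>m\<bar> * \<bar>k\<bar>"
      using mult_left_mono[of 1 "\<bar>k\<bar>" "\<bar>m\<bar>"] by simp
    moreover have "\<bar>a - b\<bar> = \<bar>m\<bar> * \<bar>k\<bar>"
      using k by (simp add: abs_mult)
    ultimately show False
      using assms(2) by arith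
  qed
  then show ?thesis
    using k by simp
qed

lemma mod3_line_indicator_sum:
  fixes u s c :: int
  assumes "s \<in> {1, -1, 2, -2}"
  shows "of_bool (u mod 3 = c mod 3) + of_bool ((u + s) mod 3 = c mod 3)
       + (of_bool ((u + 2 * s) mod 3 = c mod 3) :: nat) = 1"
proof -
  have table: "\<forall>r \<in> {0, 1, 2}. \<forall>k \<in> {0, 1, 2}. \<forall>s \<in> {1, -1, 2, -2::int}.
      of_bool (r = k) + of_bool ((r + s) mod 3 = k) + (of_bool ((r + 2 * s) mod 3 = k) :: nat) = 1"
    by simp
  have residues: "u mod 3 \<in> {0, 1, 2}" "c mod 3 \<in> {0, 1, 2}"
    by auto
  have shift: "(u + s) mod 3 = (u mod 3 + s) mod 3" "(u + 2 * s) mod 3 = (u mod 3 + 2 * s) mod 3"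
    by (simp_all add: mod_simps)
  show ?thesis
    unfolding shift using table[rule_format, OF residues assms] .
qed

lemma colour_mod3 [simp]: "colour g mod 3 = colour g"
  by (simp add: colour_def)

lemma colour_count_cong: "a mod 3 = b mod 3 \<Longrightarrow> colour_count a P = colour_count b P"
  by (simp add: colour_count_def)

lemma colour_count_insert:
  assumes "finite A" and "g \<notin> A"
  shows "colour_count c (insert g A) = colour_count c A + of_bool (colour g = c mod 3)"
proof -
  have "{g' \<in> insert g A. colour g' = c mod 3}
      = (if colour g = c mod 3 then insert g else id) {g' \<in> A. colour g' = c mod 3}"
    by auto
  then show ?thesis
    using assms by (simp add: colour_count_def)
qed

lemma colour_count_Un_disjoint:
  "finite A \<Longrightarrow> finite B \<Longrightarrow> A \<inter> B = {} \<Longrightarrow>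
    colour_count c (A \<union> B) = colour_count c A + colour_count c B"
  unfolding colour_count_def by (subst card_Un_disjoint[symmetric]) (auto intro: arg_cong[where f = card])

lemma colour_line_indicator_sum:
  assumes "(dx, dy) \<in> dirs"
  shows "of_bool (colour (x, y) = c mod 3)
       + of_bool (colour (x + dx, y + dy) = c mod 3)
       + (of_bool (colour (x + 2 * dx, y + 2 * dy) = c mod 3) :: nat) = 1"
proof -
  have "dx + dy \<in> {1, -1, 2, -2}"
    using assms by (auto simp: dirs_def)
  moreover have "colour (x + dx, y + dy) = (x + y + (dx + dy)) mod 3"
    and "colour (x + 2 * dx, y + 2 * dy) = (x + y + 2 * (dx + dy)) mod 3"
    by (simp_all add: colour_def algebra_simps)
  ultimately show ?thesis
    using mod3_line_indicator_sum[of "dx + dy" "x + y" c] by (simp add: colour_def)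
qed

lemma jump_colour_count:
  assumes "jump n P Q" and "finite P"
  shows "colour_count c Q = colour_count c P + 1 \<or> colour_count c P = colour_count c Q + 1"
proof -
  obtain x y dx dy where d: "(dx, dy) \<in> dirs"
    and pegs: "(x, y) \<in> P" "(x + dx, y + dy) \<in> P" "(x + 2 * dx, y + 2 * dy) \<notin> P"
    and Q: "Q = (P - {(x, y), (x + dx, y + dy)}) \<union> {(x + 2 * dx, y + 2 * dy)}"
    using assms(1) unfolding jump_def by blast
  define R where "R = P - {(x, y), (x + dx, y + dy)}"
  have "(x, y) \<noteq> (x + dx, y + dy)"
    using d by (auto simp: dirs_def)
  then have P_eq: "P = insert (x, y) (insert (x + dx, y + dy) R)"
    and Q_eq: "Q = insert (x + 2 * dx, y + 2 * dy) R"
    and fresh: "(x, y) \<notin> insert (x + dx, y + dy) R" "(x + dx, y + dy) \<notin> R"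
      "(x + 2 * dx, y + 2 * dy) \<notin> R"
    using pegs Q by (auto simp: R_def)
  have "finite R"
    using assms(2) by (simp add: R_def)
  then have "colour_count c P = colour_count c R
        + of_bool (colour (x + dx, y + dy) = c mod 3) + of_bool (colour (x, y) = c mod 3)"
    and "colour_count c Q = colour_count c R + of_bool (colour (x + 2 * dx, y + 2 * dy) = c mod 3)"
    unfolding P_eq Q_eq using fresh by (simp_all add: colour_count_insert)
  then show ?thesis
    using colour_line_indicator_sum[OF d, of x y c] by presburger
qed

lemma same_colour_parity_jump:
  assumes "jump n P Q" and "finite P"
  shows "same_colour_parity Q a b \<longleftrightarrow> same_colour_parity P a b"
proof -
  have flip: "even (colour_count c Q) \<longleftrightarrow> odd (colour_count c P)" for c
    using jump_colour_count[OF assms, of c] by auto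
  show ?thesis
    unfolding same_colour_parity_def even_add flip by simp
qed

lemma colour_count_singleton: "colour_count c {g} = of_bool (colour g = c mod 3)"
  using colour_count_insert[of "{}" g c] by (simp add: colour_count_def)

lemma same_colour_parity_singleton: "\<not> same_colour_parity {g} (colour g) (colour g + 1)"
proof -
  have "\<not> 3 dvd (colour g + 1 - colour g)"
    by simp
  then have "(colour g + 1) mod 3 \<noteq> colour g"
    unfolding mod_eq_dvd_iff[symmetric] colour_mod3 .
  then show ?thesis
    by (simp add: same_colour_parity_def colour_count_singleton)
qed

lemma same_colour_parity_Diff_singleton:
  assumes "finite B" and "g \<in> B"
  shows "same_colour_parity B a b
    \<longleftrightarrow> (same_colour_parity (B - {g}) a b \<longleftrightarrow> same_colour_parity {g} a b)"
proof -
  have split: "colour_count c B = colour_count c (B - {g}) + colour_count c {g}" for c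
    using colour_count_insert[of "B - {g}" g c] assms
    by (simp add: insert_absorb colour_count_singleton)
  show ?thesis
    unfolding same_colour_parity_def split[of a] split[of b] even_add by blast
qed

lemma colour_rot: "colour (rot n g) = (colour g + int n - 1) mod 3"
proof (cases g)
  case (Pair x y)
  have "fst (rot n g) + snd (rot n g) = x + y + (int n - 1) + 3 * (- x)"
    unfolding Pair rot_def by simp
  then have "colour (rot n g) = (x + y + (int n - 1) + 3 * (- x)) mod 3"
    unfolding colour_def by (rule arg_cong)
  also have "\<dots> = (x + y + (int n - 1)) mod 3"
    by (rule mod_mult_self2)
  also have "\<dots> = (colour g + int n - 1) mod 3"
    unfolding Pair colour_def fst_conv snd_conv add_diff_eq[symmetric] by (rule mod_add_left_eq[symmetric])
  finally show ?thesis .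
qed

lemma rot_rot_rot [simp]: "rot n (rot n (rot n g)) = g"
  by (simp add: rot_def)

lemma inj_rot: "inj (rot n)"
  by (metis injI rot_rot_rot)

lemma rot_in_board: "g \<in> board n \<Longrightarrow> rot n g \<in> board n"
  by (auto simp: rot_def board_def)

lemma rot_image_eq_if_rot_symmetric:
  assumes "P \<subseteq> board n" and "rot_symmetric n P"
  shows "rot n ` P = P"
proof
  show "rot n ` P \<subseteq> P"
    using assms unfolding rot_symmetric_def by blast
  show "P \<subseteq> rot n ` P"
  proof
    fix g assume "g \<in> P"
    then have "rot n (rot n g) \<in> board n" and "rot n (rot n (rot n g)) \<in> P"
      using assms(1) by (auto intro: rot_in_board)
    then have "rot n (rot n g) \<in> P"
      using assms(2) unfolding rot_symmetric_def by blast
    then show "g \<in> rot n ` P"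
      by (metis image_eqI rot_rot_rot)
  qed
qed

lemma colour_count_rot_symmetric:
  assumes "P \<subseteq> board n" and "rot_symmetric n P"
  shows "colour_count (c + int n - 1) P = colour_count c P"
proof -
  have colour_iff: "colour (rot n g) = (c + int n - 1) mod 3 \<longleftrightarrow> colour g = c mod 3" for g
  proof -
    have "(colour g + int n - 1) mod 3 = (c + int n - 1) mod 3 \<longleftrightarrow> colour g mod 3 = c mod 3"
      by (simp del: colour_mod3 add: mod_eq_dvd_iff)
    then show ?thesis
      unfolding colour_rot colour_mod3 .
  qed
  have "rot n ` {g \<in> P. colour g = c mod 3} = {g \<in> rot n ` P. colour g = (c + int n - 1) mod 3}"
    by (auto simp: colour_iff)
  then have image: "rot n ` {g \<in> P. colour g = c mod 3} = {g \<in> P. colour g = (c + int n - 1) mod 3}"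
    unfolding rot_image_eq_if_rot_symmetric[OF assms] .
  have "colour_count (c + int n - 1) P = card (rot n ` {g \<in> P. colour g = c mod 3})"
    unfolding colour_count_def image ..
  also have "\<dots> = colour_count c P"
    unfolding colour_count_def by (rule card_image) (rule inj_on_subset[OF inj_rot subset_UNIV])
  finally show ?thesis .
qed

lemma colour_count_eq_if_rot_symmetric:
  assumes "n mod 3 \<noteq> 1" and "P \<subseteq> board n" and "rot_symmetric n P"
  shows "colour_count a P = colour_count b P"
proof -
  have shift: "colour_count (c + int n - 1) P = colour_count c P" for c
    using colour_count_rot_symmetric[OF assms(2,3)] .
  have reduce: "(c + int n - 1) mod 3 = (c + (int n - 1) mod 3) mod 3" for c
    unfolding add_diff_eq[symmetric] by (rule mod_add_right_eq[symmetric])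
  have "(int n - 1) mod 3 \<noteq> 0"
    using assms(1) by presburger
  then consider "(int n - 1) mod 3 = 1" | "(int n - 1) mod 3 = 2"
    by fastforce
  then have succ: "colour_count (c + 1) P = colour_count c P" for c
  proof cases
    case 1
    then show ?thesis
      using shift[of c] reduce[of c] colour_count_cong[of "c + 1" "c + int n - 1" P] by simp
  next
    case 2
    then show ?thesis
      using shift[of "c + 1"] reduce[of "c + 1"] colour_count_cong[of "c + 1 + int n - 1" c P] by simp
  qed
  have "colour_count c P = colour_count 0 P" for c
  proof -
    have "colour_count c P = colour_count (c mod 3) P"
      by (rule colour_count_cong) simp
    moreover have "colour_count 1 P = colour_count 0 P" and "colour_count 2 P = colour_count 0 P"
      using succ[of 0] succ[of 1] by simp_all
    moreover have "c mod 3 \<in> {0, 1, 2}"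
      by auto
    ultimately show ?thesis
      by (elim insertE) simp_all
  qed
  then show ?thesis
    by metis
qed

lemma finite_board: "finite (board n)"
proof (rule finite_subset)
  show "board n \<subseteq> {0..int n} \<times> {0..int n}"
    by (auto simp: board_def)
qed simp

lemma jump_subset_board: "jump n P Q \<Longrightarrow> P \<subseteq> board n \<Longrightarrow> Q \<subseteq> board n"
  unfolding jump_def by auto

(* Each column x \<le> n of the three bottom rows, and the corner x > n, holds one hole of each
   colour; so min x (n + 1) maps every colour class of the strip bijectively onto {0..n + 1}. *)
lemma colour_count_board_strip: "colour_count c {g \<in> board (n + 3). int n \<le> snd g} = n + 2"
proof -
  let ?S = "{g \<in> {g \<in> board (n + 3). int n \<le> snd g}. colour g = c mod 3}"
  have member: "(x, y) \<in> ?S \<longleftrightarrow>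
      0 \<le> x \<and> x \<le> y \<and> y \<le> int n + 2 \<and> int n \<le> y \<and> (x + y) mod 3 = c mod 3" for x y
    by (auto simp: board_def colour_def)
  let ?f = "\<lambda>g. min (fst g) (int n + 1)"
  have inj: "inj_on ?f ?S"
  proof (rule inj_onI)
    fix g g' assume "g \<in> ?S" "g' \<in> ?S" and eq: "?f g = ?f g'"
    obtain x y x' y' where g: "g = (x, y)" and g': "g' = (x', y')"
      by fastforce
    have holes: "0 \<le> x" "x \<le> y" "y \<le> int n + 2" "int n \<le> y"
        "0 \<le> x'" "x' \<le> y'" "y' \<le> int n + 2" "int n \<le> y'"
      and colours: "(x + y) mod 3 = (x' + y') mod 3"
      using \<open>g \<in> ?S\<close> \<open>g' \<in> ?S\<close> unfolding g g' member by simp_all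
    have same_column: "x = x' \<or> (int n + 1 \<le> x \<and> int n + 1 \<le> x')"
      using eq unfolding g g' by (auto simp: min_def split: if_splits)
    then have "x + y - (x' + y') < 3" and "x' + y' - (x + y) < 3"
      using holes by auto
    then have "\<bar>x + y - (x' + y')\<bar> < 3"
      by (simp add: abs_less_iff)
    with colours have "x + y = x' + y'"
      by (rule eq_if_mod_eq_abs_diff_less)
    moreover have "x = x'" if "int n + 1 \<le> x" and "int n + 1 \<le> x'"
    proof -
      have "x = int n + 1 \<or> x = int n + 2" and "x' = int n + 1 \<or> x' = int n + 2"
        using that holes by auto
      with \<open>x + y = x' + y'\<close> holes show "x = x'"
        by auto
    qed
    ultimately show "g = g'"
      using same_column unfolding g g' by auto
  qed
  have image: "?f ` ?S = {0..int n + 1}"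
  proof
    show "?f ` ?S \<subseteq> {0..int n + 1}"
      by (auto simp: board_def)
    show "{0..int n + 1} \<subseteq> ?f ` ?S"
    proof
      fix v assume v: "v \<in> {0..int n + 1}"
      define j where "j = (c - v - int n) mod 3"
      have j: "0 \<le> j" "j < 3"
        by (simp_all add: j_def)
      have colour_j: "(v + (int n + j)) mod 3 = c mod 3"
        unfolding j_def add.assoc[symmetric] by (simp add: mod_simps)
      obtain g where "g \<in> ?S" and "v = ?f g"
      proof (cases "v = int n + 1 \<and> j = 0")
        case True
        have "(int n + 2 + (int n + 2)) mod 3 = (v + (int n + j)) mod 3"
          using True by presburger
        then have "(int n + 2, int n + 2) \<in> ?S"
          unfolding member using colour_j by simp
        then show thesis
          using True by (intro that) auto
      next
        case False
        then have "(v, int n + j) \<in> ?S"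
          unfolding member using v j colour_j by auto
        then show thesis
          using v by (intro that) auto
      qed
      then show "v \<in> ?f ` ?S"
        by (rule rev_image_eqI)
    qed
  qed
  have "colour_count c {g \<in> board (n + 3). int n \<le> snd g} = card (?f ` ?S)"
    unfolding colour_count_def using inj by (rule card_image[symmetric])
  also have "\<dots> = n + 2"
    unfolding image by simp
  finally show ?thesis .
qed

lemma colour_count_board_3m1:
  "colour_count c (board (3 * m + 1)) = of_bool (c mod 3 = 0) + 3 * (m * (m + 1) div 2)"
proof (induction m)
  case 0
  have "board 1 = {(0, 0)}"
    by (auto simp: board_def)
  then show ?case
    by (auto simp: colour_count_singleton colour_def)
next
  case (Suc m)
  let ?n = "3 * m + 1"
  let ?strip = "{g \<in> board (?n + 3). int ?n \<le> snd g}"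
  have split: "board (3 * Suc m + 1) = board ?n \<union> ?strip"
    by (auto simp: board_def)
  have "finite ?strip"
    using finite_board by simp
  moreover have "board ?n \<inter> ?strip = {}"
    by (auto simp: board_def)
  ultimately have "colour_count c (board ?n \<union> ?strip) = colour_count c (board ?n) + colour_count c ?strip"
    by (rule colour_count_Un_disjoint[OF finite_board])
  then have "colour_count c (board (3 * Suc m + 1)) = colour_count c (board ?n) + (?n + 2)"
    unfolding split colour_count_board_strip .
  also have "\<dots> = of_bool (c mod 3 = 0) + 3 * (Suc m * (Suc m + 1) div 2)"
  proof -
    have "Suc m * (Suc m + 1) = m * (m + 1) + 2 * Suc m"
      by (simp add: algebra_simps)
    then have "Suc m * (Suc m + 1) div 2 = m * (m + 1) div 2 + Suc m"
      by simp
    then show ?thesis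
      unfolding Suc.IH by simp
  qed
  finally show ?case .
qed

lemma board_not_same_colour_parity:
  assumes "n mod 3 = 1"
  shows "\<not> same_colour_parity (board n) 0 1"
proof -
  have "\<exists>m. n = 3 * m + 1"
    using assms by presburger
  then obtain m where n: "n = 3 * m + 1"
    by blast
  have "colour_count 0 (board n) = 1 + 3 * (m * (m + 1) div 2)"
    and "colour_count 1 (board n) = 3 * (m * (m + 1) div 2)"
    unfolding n colour_count_board_3m1 by simp_all
  then show ?thesis
    unfolding same_colour_parity_def by simp
qed

lemma jump_seq_invariant:
  assumes "jump_seq n Ps" and "I (hd Ps)" and "\<And>P Q. jump n P Q \<Longrightarrow> I P \<Longrightarrow> I Q"
    and "P \<in> set Ps"
  shows "I P"
proof -
  have "I (Ps ! i)" if "i < length Ps" for i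
    using that
  proof (induction i)
    case 0
    then show ?case
      using assms(1,2) by (simp add: jump_seq_def hd_conv_nth)
  next
    case (Suc i)
    then have "jump n (Ps ! i) (Ps ! Suc i)"
      using assms(1) by (simp add: jump_seq_def)
    moreover have "I (Ps ! i)"
      using Suc by simp
    ultimately show ?case
      by (rule assms(3))
  qed
  moreover obtain i where "i < length Ps" and "P = Ps ! i"
    using assms(4) by (auto simp: in_set_conv_nth)
  ultimately show ?thesis
    by simp
qed

lemma jump_seq_colour_parity_invariant:
  assumes "jump_seq n Ps" and "hd Ps \<subseteq> board n" and "P \<in> set Ps"
  shows "P \<subseteq> board n" and "same_colour_parity P a b \<longleftrightarrow> same_colour_parity (hd Ps) a b"
proof -
  let ?I = "\<lambda>Q. Q \<subseteq> board n
    \<and> (\<forall>a b. same_colour_parity Q a b = same_colour_parity (hd Ps) a b)"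
  have "?I P"
  proof (rule jump_seq_invariant[OF assms(1) _ _ assms(3)])
    show "?I (hd Ps)"
      using assms(2) by simp
    fix Q Q' assume jump: "jump n Q Q'" and "?I Q"
    then have "Q \<subseteq> board n"
      and parity: "same_colour_parity Q a b = same_colour_parity (hd Ps) a b" for a b
      by simp_all
    have "finite Q"
      using \<open>Q \<subseteq> board n\<close> finite_board by (rule finite_subset)
    show "?I Q'"
      using jump_subset_board[OF jump \<open>Q \<subseteq> board n\<close>]
        same_colour_parity_jump[OF jump \<open>finite Q\<close>] parity
      by simp
  qed
  then show "P \<subseteq> board n" and "same_colour_parity P a b \<longleftrightarrow> same_colour_parity (hd Ps) a b"
    by simp_all
qed

theorem corollary2p1:
  fixes n :: nat and h :: "int \<times> int" and Ps :: "(int \<times> int) set list"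
  assumes "n \<ge> 1"
    and "h \<in> board n"
    and "jump_seq n Ps"
    and "hd Ps = board n - {h}"
    and "last Ps = {h}"
  shows "\<forall>P \<in> set Ps. \<not> rot_symmetric n P"
proof (intro ballI notI)
  \<comment> \<open>The hypothesis n \<ge> 1 is implied by h \<in> board n and not needed.\<close>
  fix P assume "P \<in> set Ps" and symmetric: "rot_symmetric n P"
  have "hd Ps \<subseteq> board n"
    using assms(4) by auto
  note invariant = jump_seq_colour_parity_invariant[OF assms(3) this]
  have "last Ps \<in> set Ps"
    using assms(3) by (simp add: jump_seq_def)
  note final = invariant(2)[OF this, unfolded assms(4,5)]
  show False
  proof (cases "n mod 3 = 1")
    case True
    then show False
      using board_not_same_colour_parity same_colour_parity_Diff_singleton[OF finite_board assms(2)] final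
      by blast
  next
    case False
    have "P \<subseteq> board n"
      using invariant(1) \<open>P \<in> set Ps\<close> .
    with False symmetric have "colour_count (colour h) P = colour_count (colour h + 1) P"
      by (intro colour_count_eq_if_rot_symmetric)
    then have "same_colour_parity P (colour h) (colour h + 1)"
      by (simp add: same_colour_parity_def)
    then have "same_colour_parity {h} (colour h) (colour h + 1)"
      using invariant(2)[OF \<open>P \<in> set Ps\<close>] unfolding assms(4) final by blast
    then show False
      using same_colour_parity_singleton by blast
  qed
qed

end
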